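(* Let $\{X_t\}$ be a Geo-INAR(1) process with $\mu>0$ and $\alpha\in(0,\mu/(1+\mu))$. For $h\ge1$ let $\mu_\varepsilon^{(h)}=(1-\alpha^h)\mu$, $\pi_\star^{(h)}=1-\frac{\alpha^h}{1+\mu_\varepsilon^{(h)}}$, $p^{(h)}=\frac{\mu_\varepsilon^{(h)}-\alpha^h}{1+\mu_\varepsilon^{(h)}-\alpha^h}$ and $p_{\varepsilon^{(h)}}(j)=\frac{(\mu_\varepsilon^{(h)})^j}{(1+\mu_\varepsilon^{(h)})^{j+1}}$. Then the $h$-step transition probabilities $p_{ij}^{(h)}=P(X_{t+h}=j\mid X_t=i)$ are, for all $j\ge0$, $p_{0j}^{(h)}=p_{\varepsilon^{(h)}}(j)$ and, for $i\ge1$, $$p_{ij}^{(h)}=p_{\varepsilon^{(h)}}(j)\Big[\big(\pi_\star^{(h)}\big)^{i}+\sum_{m=1}^{j}\sum_{l=1}^{m}\Big(1+\frac{1}{\mu_\varepsilon^{(h)}}\Big)^{m}A_l^i\big(\pi_\star^{(h)}\big)B_l^m\big(p^{(h)}\big)\Big],$$ where $A_l^i(q)=\binom{i+l-1}{l}q^i(1-q)^l$ and $B_l^m(r)=\binom{m-1}{l-1}r^{m-l}(1-r)^l$.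
   Context: Geo-INAR(1) process: fix $\mu>0$, $\alpha\in(0,1)$, $\mu_\varepsilon=(1-\alpha)\mu$, $\pi=1-\alpha/\mu_\varepsilon$. Let $\{\varepsilon_t\}$ be i.i.d. $\mathrm{Geo}(\mu_\varepsilon)$ and, for each $t$, let $\{G_{t,i}\}_{i\ge1}$ be i.i.d. $\mathrm{ZMG}(\pi,\mu_\varepsilon)$, all mutually independent. The process satisfies $X_t=\sum_{i=1}^{X_{t-1}}G_{t,i}+\varepsilon_t$, $\varepsilon_t$ independent of $X_{t-h}$ for $h\ge1$, and $X_t\sim\mathrm{Geo}(\mu)$ for all $t$. $\mathrm{Geo}(m)$ has $P(k)=\frac{m^k}{(1+m)^{k+1}}$; $\mathrm{ZMG}(\pi,m)$ has $P(0)=\pi+\frac{1-\pi}{1+m}$, $P(k)=(1-\pi)\frac{m^k}{(1+m)^{k+1}}$, $k\ge1$. *)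

theory Defs
  imports "HOL-Probability.Probability"
begin

definition geo_p :: "real \<Rightarrow> nat \<Rightarrow> real" where
  "geo_p m k = m ^ k / (1 + m) ^ (k + 1)"

definition zmg_p :: "real \<Rightarrow> real \<Rightarrow> nat \<Rightarrow> real" where
  "zmg_p p m k = (if k = 0 then p + (1 - p) / (1 + m) else (1 - p) * (m ^ k / (1 + m) ^ (k + 1)))"

definition coefA :: "nat \<Rightarrow> nat \<Rightarrow> real \<Rightarrow> real" where
  "coefA l i q = real ((i + l - 1) choose l) * q ^ i * (1 - q) ^ l"

definition coefB :: "nat \<Rightarrow> nat \<Rightarrow> real \<Rightarrow> real" where
  "coefB l m r = real ((m - 1) choose (l - 1)) * r ^ (m - l) * (1 - r) ^ l"

end

theory Submission
  imports Defs
begin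

text \<open>
  Write \<open>\<Phi>\<^sub>a\<close> and \<open>\<Psi>\<^sub>a\<close> for the generating functions of \<open>ZMG(1 - a/\<mu>\<^sub>a, \<mu>\<^sub>a)\<close> and
  \<open>Geo(\<mu>\<^sub>a)\<close>, where \<open>\<mu>\<^sub>a = (1 - a) \<mu>\<close>; the offspring and innovation laws of the process are
  those with \<open>a = \<alpha>\<close>. Given the past up to time \<open>u\<close>, \<open>X (u + 1)\<close> is a sum of \<open>X u\<close>
  independent offspring and an independent innovation, so
  \<open>E[s ^ X (u + 1); A] = \<Psi>\<^sub>\<alpha>(s) E[\<Phi>\<^sub>\<alpha>(s) ^ X u; A]\<close> for events \<open>A\<close> of the past. The identities
  \<open>\<Phi>\<^sub>a \<circ> \<Phi>\<^sub>b = \<Phi>\<^sub>a\<^sub>b\<close> and \<open>\<Psi>\<^sub>a(\<Phi>\<^sub>b) \<Psi>\<^sub>b = \<Psi>\<^sub>a\<^sub>b\<close> then give, by induction on \<open>h\<close>,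
  \<open>E[s ^ X (t + h); X t = i] = P(X t = i) \<Phi>\<^sub>c(s) ^ i \<Psi>\<^sub>c(s)\<close> with \<open>c = \<alpha> ^ h\<close>. Power series
  that agree on an interval have the same coefficients, so the \<open>h\<close>-step transition
  probability \<open>p\<^sub>i\<^sub>j\<close> is the \<open>j\<close>-th coefficient of \<open>\<Psi>\<^sub>c \<Phi>\<^sub>c ^ i\<close>. To compute it, note that a
  \<open>ZMG\<close> variable is a geometric number (with parameter \<open>1 - \<pi>\<^sub>\<star>\<close>) of independent geometric
  variables on \<open>{1, 2, \<dots>}\<close> (with parameter \<open>p\<close>): this composition of power series yields the
  negative binomial weights \<open>A\<^sub>l\<^sup>i\<close> and \<open>B\<^sub>l\<^sup>m\<close>, and the convolution with the geometric
  innovation multiplies the \<open>m\<close>-th term by \<open>(1 + 1/\<mu>\<^sub>\<epsilon>) ^ m\<close>.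
\<close>

section \<open>Coefficients of the transition power series\<close>

definition geometric_fps :: "real \<Rightarrow> real fps" where
  "geometric_fps c = Abs_fps (\<lambda>n. c ^ n)"

lemma fps_nth_geometric_fps [simp]: "fps_nth (geometric_fps c) n = c ^ n"
  by (simp add: geometric_fps_def)

lemma geometric_fps_times_one_minus: "geometric_fps c * (1 - fps_const c * fps_X) = 1"
proof (rule fps_ext)
  fix n
  show "fps_nth (geometric_fps c * (1 - fps_const c * fps_X)) n = fps_nth 1 n"
    by (cases n) (simp_all add: algebra_simps)
qed

lemma fps_nth_geometric_fps_power:
  "fps_nth (geometric_fps c ^ k) n = real ((k + n - 1) choose n) * c ^ n"
proof (induction k arbitrary: n)
  case 0
  then show ?case by (cases n) auto
next
  case (Suc k)
  have "fps_nth (geometric_fps c ^ Suc k) n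
      = (\<Sum>j=0..n. c ^ j * (real ((k + (n - j) - 1) choose (n - j)) * c ^ (n - j)))"
    by (simp add: fps_mult_nth Suc)
  also have "\<dots> = c ^ n * (\<Sum>j=0..n. real ((k + (n - j) - 1) choose (n - j)))"
    by (subst sum_distrib_left, rule sum.cong[OF refl])
       (auto simp: mult_ac power_add[symmetric])
  also have "(\<Sum>j=0..n. real ((k + (n - j) - 1) choose (n - j))) = (\<Sum>j=0..n. real ((k + j - 1) choose j))"
    by (rule sum.reindex_bij_witness[where i="\<lambda>j. n - j" and j="\<lambda>j. n - j"]) auto
  also have "\<dots> = real ((k + n) choose n)"
  proof (cases k)
    case 0
    have "(\<Sum>j=0..n. real ((j - 1) choose j)) = (\<Sum>j\<in>{0}. real ((j - 1) choose j))"
      by (rule sum.mono_neutral_right) auto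
    then show ?thesis using 0 by simp
  next
    case (Suc r)
    have "(\<Sum>j=0..n. real ((k + j - 1) choose j)) = real (\<Sum>j\<le>n. (r + j) choose j)"
      by (simp add: Suc atMost_atLeast0)
    also have "\<dots> = real ((k + n) choose n)"
      by (subst sum_choose_lower) (simp add: Suc)
    finally show ?thesis .
  qed
  finally show ?case by simp
qed

definition positive_geometric_fps :: "real \<Rightarrow> real fps" where
  "positive_geometric_fps p = fps_const (1 - p) * fps_X * geometric_fps p"

lemma positive_geometric_fps_times_one_minus:
  "positive_geometric_fps p * (1 - fps_const p * fps_X) = fps_const (1 - p) * fps_X"
  using geometric_fps_times_one_minus[of p] by (simp add: positive_geometric_fps_def mult.assoc)

lemma fps_nth_positive_geometric_fps_0 [simp]: "fps_nth (positive_geometric_fps p) 0 = 0"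
  by (simp add: positive_geometric_fps_def)

lemma fps_nth_positive_geometric_fps_power:
  assumes "1 \<le> l"
  shows "fps_nth (positive_geometric_fps p ^ l) m = (if l \<le> m then coefB l m p else 0)"
proof -
  have "positive_geometric_fps p ^ l = fps_const ((1 - p) ^ l) * (fps_X ^ l * geometric_fps p ^ l)"
    by (simp add: positive_geometric_fps_def power_mult_distrib mult.assoc)
  moreover have "(m - 1) choose (m - l) = (m - 1) choose (l - 1)" if "l \<le> m"
    using that assms binomial_symmetric[of "l - 1" "m - 1"] by (simp add: Suc_diff_le)
  ultimately show ?thesis
    using assms by (auto simp: fps_X_power_mult_nth fps_nth_geometric_fps_power coefB_def)
qed

definition geo_fps :: "real \<Rightarrow> real fps" where
  "geo_fps m = Abs_fps (geo_p m)"

definition zmg_fps :: "real \<Rightarrow> real \<Rightarrow> real fps" where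
  "zmg_fps \<pi> m = Abs_fps (zmg_p \<pi> m)"

lemma geo_fps_eq: "geo_fps m = fps_const (1 / (1 + m)) * geometric_fps (m / (1 + m))"
  by (rule fps_ext) (simp add: geo_fps_def geo_p_def power_divide)

lemma zmg_fps_eq: "zmg_fps \<pi> m = fps_const \<pi> + fps_const (1 - \<pi>) * geo_fps m"
  by (rule fps_ext) (simp add: zmg_fps_def geo_fps_def zmg_p_def geo_p_def)

lemma zmg_fps_times_one_minus:
  "zmg_fps \<pi> m * (1 - fps_const (m / (1 + m)) * fps_X)
     = fps_const (zmg_p \<pi> m 0) - fps_const (\<pi> * m / (1 + m)) * fps_X"
proof -
  define q where "q = m / (1 + m)"
  define c where "c = (1 - \<pi>) / (1 + m)"
  have "zmg_fps \<pi> m = fps_const \<pi> + fps_const c * geometric_fps q"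
    by (simp add: zmg_fps_eq geo_fps_eq mult.assoc[symmetric] c_def q_def)
  then have "zmg_fps \<pi> m * (1 - fps_const q * fps_X)
      = fps_const \<pi> * (1 - fps_const q * fps_X) + fps_const c * (geometric_fps q * (1 - fps_const q * fps_X))"
    by (simp add: distrib_right mult.assoc)
  also have "\<dots> = fps_const \<pi> * (1 - fps_const q * fps_X) + fps_const c"
    by (simp only: geometric_fps_times_one_minus mult_1_right)
  also have "\<dots> = fps_const (\<pi> + c) - fps_const (\<pi> * q) * fps_X"
    by (rule fps_ext) (simp add: algebra_simps)
  finally show ?thesis by (simp add: zmg_p_def q_def c_def)
qed

lemma zmg_fps_eq_compose:
  fixes \<pi> m ps p :: real
  assumes ps_def: "ps = zmg_p \<pi> m 0" and p_def: "p = \<pi> * m / ((1 + m) * ps)"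
    and m: "1 + m \<noteq> 0" and ps_nonzero: "ps \<noteq> 0"
  shows "zmg_fps \<pi> m = fps_const ps * (geometric_fps (1 - ps) oo positive_geometric_fps p)"
proof -
  let ?u = "1 - ps" and ?Y = "positive_geometric_fps p"
  have ps_p: "ps * p = \<pi> * m / (1 + m)"
    using ps_nonzero by (simp add: p_def)
  have q: "p + ?u * (1 - p) = m / (1 + m)"
  proof -
    have "p + ?u * (1 - p) = 1 - ps + ps * p" by (simp add: algebra_simps)
    also have "\<dots> = (1 - \<pi>) * (1 - 1 / (1 + m)) + \<pi> * (m / (1 + m))"
      unfolding ps_p by (simp add: ps_def zmg_p_def algebra_simps)
    also have "1 - 1 / (1 + m) = m / (1 + m)"
      using m by (simp add: field_simps)
    also have "(1 - \<pi>) * (m / (1 + m)) + \<pi> * (m / (1 + m)) = m / (1 + m)"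
      by (metis distrib_right mult_1 diff_add_cancel)
    finally show ?thesis .
  qed
  have inner: "(1 - fps_const p * fps_X) - fps_const ?u * (?Y * (1 - fps_const p * fps_X))
      = 1 - fps_const (p + ?u * (1 - p)) * fps_X"
    unfolding positive_geometric_fps_times_one_minus by (rule fps_ext) (simp add: algebra_simps)
  have "zmg_fps \<pi> m * (1 - fps_const ?u * ?Y) * (1 - fps_const p * fps_X)
      = zmg_fps \<pi> m * ((1 - fps_const p * fps_X) - fps_const ?u * (?Y * (1 - fps_const p * fps_X)))"
    by (simp add: algebra_simps)
  also have "\<dots> = zmg_fps \<pi> m * (1 - fps_const (m / (1 + m)) * fps_X)"
    by (simp only: inner q)
  also have "\<dots> = fps_const ps * (1 - fps_const p * fps_X)"
    unfolding zmg_fps_times_one_minus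
    by (rule fps_ext) (simp add: ps_def [symmetric] ps_p [symmetric] del: times_divide_eq_right)
  finally have "zmg_fps \<pi> m * (1 - fps_const ?u * ?Y) * (1 - fps_const p * fps_X)
      = fps_const ps * (1 - fps_const p * fps_X)" .
  moreover have "fps_nth (1 - fps_const p * fps_X) 0 \<noteq> 0"
    by simp
  ultimately have cancel: "zmg_fps \<pi> m * (1 - fps_const ?u * ?Y) = fps_const ps"
    by (metis fps_nonzero_nth mult_cancel_right)
  have Y0: "fps_nth ?Y 0 = 0"
    by simp
  have "(geometric_fps ?u oo ?Y) * ((1 - fps_const ?u * fps_X) oo ?Y)
      = (geometric_fps ?u * (1 - fps_const ?u * fps_X)) oo ?Y"
    by (rule fps_compose_mult_distrib[OF Y0, symmetric])
  then have inverse: "(geometric_fps ?u oo ?Y) * (1 - fps_const ?u * ?Y) = 1"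
    by (simp add: geometric_fps_times_one_minus fps_compose_sub_distrib fps_compose_mult_distrib[OF Y0])
  have "zmg_fps \<pi> m = zmg_fps \<pi> m * ((geometric_fps ?u oo ?Y) * (1 - fps_const ?u * ?Y))"
    by (simp only: inverse mult_1_right)
  also have "\<dots> = zmg_fps \<pi> m * (1 - fps_const ?u * ?Y) * (geometric_fps ?u oo ?Y)"
    by (simp only: ac_simps)
  finally show ?thesis
    by (simp only: cancel)
qed

lemma fps_nth_zmg_fps_power:
  fixes \<pi> m ps p :: real
  assumes ps_def: "ps = zmg_p \<pi> m 0" and p_def: "p = \<pi> * m / ((1 + m) * ps)"
    and m: "1 + m \<noteq> 0" and ps_nonzero: "ps \<noteq> 0"
  shows "fps_nth (zmg_fps \<pi> m ^ i) n
           = (if n = 0 then ps ^ i else (\<Sum>l = 1..n. coefA l i ps * coefB l n p))"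
proof -
  let ?Y = "positive_geometric_fps p"
  have "zmg_fps \<pi> m ^ i = fps_const (ps ^ i) * (geometric_fps (1 - ps) ^ i oo ?Y)"
    by (simp add: zmg_fps_eq_compose[OF assms] power_mult_distrib fps_compose_power)
  then have "fps_nth (zmg_fps \<pi> m ^ i) n
      = ps ^ i * (\<Sum>l = 0..n. real ((i + l - 1) choose l) * (1 - ps) ^ l * fps_nth (?Y ^ l) n)"
    by (simp add: fps_compose_nth fps_nth_geometric_fps_power)
  also have "\<dots> = (if n = 0 then ps ^ i else (\<Sum>l = 1..n. coefA l i ps * coefB l n p))"
  proof (cases "n = 0")
    case False
    then have "(\<Sum>l = 0..n. real ((i + l - 1) choose l) * (1 - ps) ^ l * fps_nth (?Y ^ l) n)
        = (\<Sum>l = 1..n. real ((i + l - 1) choose l) * (1 - ps) ^ l * coefB l n p)"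
      by (simp add: sum.atLeast_Suc_atMost fps_nth_positive_geometric_fps_power)
    with False show ?thesis
      by (simp add: sum_distrib_left coefA_def mult_ac)
  qed simp
  finally show ?thesis .
qed

lemma geo_p_diff:
  assumes "m > 0" and "k \<le> j"
  shows "geo_p m (j - k) = geo_p m j * (1 + 1 / m) ^ k"
proof -
  obtain n where j: "j = k + n"
    using assms(2) le_Suc_ex by blast
  have "geo_p m j = (m / (1 + m)) ^ k * geo_p m n"
    by (simp add: j geo_p_def power_add power_divide mult.assoc)
  then have "geo_p m j * (1 + 1 / m) ^ k = (m / (1 + m) * (1 + 1 / m)) ^ k * geo_p m n"
    by (simp only: power_mult_distrib ac_simps)
  also have "m / (1 + m) * (1 + 1 / m) = 1"
    using assms(1) by (simp add: field_simps) (simp add: add_pos_pos less_imp_neq[symmetric])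
  finally show ?thesis
    by (simp add: j)
qed

lemma fps_nth_geo_fps_times_zmg_fps_power:
  fixes \<pi> m ps p :: real
  assumes ps_def: "ps = zmg_p \<pi> m 0" and p_def: "p = \<pi> * m / ((1 + m) * ps)"
    and m: "m > 0" and ps_nonzero: "ps \<noteq> 0"
  shows "fps_nth (geo_fps m * zmg_fps \<pi> m ^ i) j
           = geo_p m j * (ps ^ i + (\<Sum>k = 1..j. \<Sum>l = 1..k. (1 + 1 / m) ^ k * coefA l i ps * coefB l k p))"
proof -
  have m1: "1 + m \<noteq> 0"
    using m by simp
  note zmg_power = fps_nth_zmg_fps_power[OF ps_def p_def m1 ps_nonzero]
  have "fps_nth (geo_fps m * zmg_fps \<pi> m ^ i) j
      = (\<Sum>k = 0..j. geo_p m (j - k) * fps_nth (zmg_fps \<pi> m ^ i) k)"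
    by (simp add: fps_mult_nth geo_fps_def)
      (rule sum.reindex_bij_witness[where i="\<lambda>k. j - k" and j="\<lambda>k. j - k"]; auto)
  also have "\<dots> = geo_p m j * (\<Sum>k = 0..j. (1 + 1 / m) ^ k * fps_nth (zmg_fps \<pi> m ^ i) k)"
    by (simp add: sum_distrib_left geo_p_diff[OF m] mult_ac)
  also have "(\<Sum>k = 0..j. (1 + 1 / m) ^ k * fps_nth (zmg_fps \<pi> m ^ i) k)
      = ps ^ i + (\<Sum>k = 1..j. \<Sum>l = 1..k. (1 + 1 / m) ^ k * coefA l i ps * coefB l k p)"
    by (subst sum.atLeast_Suc_atMost) (simp_all add: zmg_power sum_distrib_left mult.assoc)
  finally show ?thesis .
qed

lemma fps_nth_geo_fps_times_zmg_fps_thinning_power: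
  assumes "m > 0" "a < 1 + m"
  shows "fps_nth (geo_fps m * zmg_fps (1 - a / m) m ^ i) j
           = geo_p m j * ((1 - a / (1 + m)) ^ i + (\<Sum>k = 1..j. \<Sum>l = 1..k.
               (1 + 1 / m) ^ k * coefA l i (1 - a / (1 + m)) * coefB l k ((m - a) / (1 + m - a))))"
proof (rule fps_nth_geo_fps_times_zmg_fps_power)
  have "zmg_p (1 - a / m) m 0 = 1 - a / m * (1 - 1 / (1 + m))"
    by (simp add: zmg_p_def algebra_simps)
  also have "1 - 1 / (1 + m) = m / (1 + m)"
    using assms(1) by (simp add: field_simps)
  finally show "1 - a / (1 + m) = zmg_p (1 - a / m) m 0"
    using assms(1) by simp
  have "(1 + m) * (1 - a / (1 + m)) = 1 + m - a"
    using assms(1) by (simp add: field_simps)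
  moreover have "(1 - a / m) * m = m - a"
    using assms(1) by (simp add: field_simps)
  ultimately show "(m - a) / (1 + m - a) = (1 - a / m) * m / ((1 + m) * (1 - a / (1 + m)))"
    by simp
  show "1 - a / (1 + m) \<noteq> 0"
    using assms by (simp add: field_simps)
qed (use assms in simp)

section \<open>Uniqueness of power series coefficients\<close>

lemma powser_zero_on_interval_imp_coeffs_zero:
  fixes d :: "nat \<Rightarrow> real"
  assumes \<delta>: "\<delta> > 0" and zero: "\<And>s. 0 < s \<Longrightarrow> s < \<delta> \<Longrightarrow> (\<lambda>n. d n * s ^ n) sums 0"
  shows "d k = 0"
proof (induction k rule: less_induct)
  case (less k)
  have shifted: "(\<lambda>n. d (n + k) * s ^ n) sums 0" if s: "0 < s" "s < \<delta>" for s
  proof -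
    have "(\<lambda>n. d (n + k) * s ^ (n + k)) sums 0"
      using zero[OF s] less sums_iff_shift[where f="\<lambda>n. d n * s ^ n" and n=k] by simp
    then have "(\<lambda>n. d (n + k) * s ^ (n + k) / s ^ k) sums 0"
      using sums_divide by fastforce
    then show ?thesis
      using s by (simp add: power_add)
  qed
  define f where "f x = (\<Sum>n. d (n + k) * x ^ n)" for x :: real
  have "summable (\<lambda>n. d (n + k) * (\<delta> / 2) ^ n)"
    using shifted[of "\<delta> / 2"] \<delta> sums_summable by auto
  then have "isCont f 0"
    unfolding f_def using \<delta> by (intro isCont_powser) auto
  then have "(f \<longlongrightarrow> d k) (at_right 0)"
    by (simp add: f_def continuous_within isCont_def filterlim_at_split)
  moreover have "\<forall>\<^sub>F x in at_right 0. f x = 0"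
    using eventually_at_right_real[OF \<delta>]
    by eventually_elim (metis f_def greaterThanLessThan_iff shifted sums_unique)
  ultimately have "((\<lambda>_. 0) \<longlongrightarrow> d k) (at_right (0::real))"
    by (rule Lim_transform_eventually)
  then show ?case
    by (simp add: tendsto_const_iff)
qed

lemma powser_sums_on_interval_coeffs_unique:
  fixes a b :: "nat \<Rightarrow> real"
  assumes "\<delta> > 0"
    and "\<And>s. 0 < s \<Longrightarrow> s < \<delta> \<Longrightarrow> (\<lambda>n. a n * s ^ n) sums f s"
    and "\<And>s. 0 < s \<Longrightarrow> s < \<delta> \<Longrightarrow> (\<lambda>n. b n * s ^ n) sums f s"
  shows "a k = b k"
proof -
  have "(\<lambda>n. (a n - b n) * s ^ n) sums 0" if "0 < s" "s < \<delta>" for s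
    using sums_diff[OF assms(2,3)[OF that]] by (simp add: algebra_simps)
  then show ?thesis
    using powser_zero_on_interval_imp_coeffs_zero[OF assms(1), of "\<lambda>n. a n - b n" k] by simp
qed

section \<open>Probability generating functions\<close>

definition geo_pgf :: "real \<Rightarrow> real \<Rightarrow> real" where
  "geo_pgf m s = 1 / (1 + m * (1 - s))"

definition zmg_pgf :: "real \<Rightarrow> real \<Rightarrow> real \<Rightarrow> real" where
  "zmg_pgf \<pi> m s = \<pi> + (1 - \<pi>) * geo_pgf m s"

lemma geo_p_nonneg: "m \<ge> 0 \<Longrightarrow> geo_p m n \<ge> 0"
  by (simp add: geo_p_def)

lemma zmg_p_nonneg: "0 \<le> \<pi> \<Longrightarrow> \<pi> \<le> 1 \<Longrightarrow> m \<ge> 0 \<Longrightarrow> zmg_p \<pi> m n \<ge> 0"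
  by (simp add: zmg_p_def)

lemma geo_p_sums:
  assumes "m \<ge> 0" "0 \<le> s" "s < 1"
  shows "(\<lambda>n. geo_p m n * s ^ n) sums geo_pgf m s"
proof -
  have "m * s < 1 + m"
    using assms mult_left_mono[of s 1 m] by simp
  then have "norm (m / (1 + m) * s) < 1"
    using assms by (simp add: abs_mult field_simps)
  then have "(\<lambda>n. 1 / (1 + m) * (m / (1 + m) * s) ^ n) sums (1 / (1 + m) * (1 / (1 - m / (1 + m) * s)))"
    by (intro sums_mult geometric_sums)
  moreover have "1 / (1 + m) * (1 / (1 - m / (1 + m) * s)) = geo_pgf m s"
    using assms by (simp add: geo_pgf_def field_simps)
  ultimately show ?thesis
    by (simp add: geo_p_def power_mult_distrib power_divide)
qed

lemma zmg_p_sums: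
  assumes "m \<ge> 0" "0 \<le> s" "s < 1"
  shows "(\<lambda>n. zmg_p \<pi> m n * s ^ n) sums zmg_pgf \<pi> m s"
proof -
  have "(\<lambda>n. (if n = 0 then \<pi> else 0) + (1 - \<pi>) * (geo_p m n * s ^ n)) sums (\<pi> + (1 - \<pi>) * geo_pgf m s)"
    using geo_p_sums[OF assms] sums_single[of 0 "\<lambda>_. \<pi>"] by (intro sums_add sums_mult) auto
  moreover have "zmg_p \<pi> m n * s ^ n = (if n = 0 then \<pi> else 0) + (1 - \<pi>) * (geo_p m n * s ^ n)" for n
    by (simp add: zmg_p_def geo_p_def)
  ultimately show ?thesis
    by (simp add: zmg_pgf_def)
qed

lemma fps_sums_mult_nonneg:
  fixes F G :: "real fps"
  assumes "\<And>n. fps_nth F n \<ge> 0" "\<And>n. fps_nth G n \<ge> 0" "s \<ge> 0"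
    and "(\<lambda>n. fps_nth F n * s ^ n) sums x" "(\<lambda>n. fps_nth G n * s ^ n) sums y"
  shows "(\<lambda>n. fps_nth (F * G) n * s ^ n) sums (x * y)"
proof -
  let ?a = "\<lambda>n. fps_nth F n * s ^ n" and ?b = "\<lambda>n. fps_nth G n * s ^ n"
  have "summable (\<lambda>n. norm (?a n))" "summable (\<lambda>n. norm (?b n))"
    using assms by (simp_all add: sums_summable)
  then have "(\<lambda>k. \<Sum>i\<le>k. ?a i * ?b (k - i)) sums ((\<Sum>k. ?a k) * (\<Sum>k. ?b k))"
    by (rule Cauchy_product_sums)
  moreover have "(\<Sum>i\<le>k. ?a i * ?b (k - i)) = fps_nth (F * G) k * s ^ k" for k
  proof -
    have "(\<Sum>i\<le>k. ?a i * ?b (k - i)) = (\<Sum>i=0..k. fps_nth F i * fps_nth G (k - i) * s ^ k)"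
      by (auto simp: atMost_atLeast0 mult_ac power_add[symmetric] intro!: sum.cong)
    then show ?thesis
      by (simp add: fps_mult_nth sum_distrib_right)
  qed
  ultimately show ?thesis
    using assms(4,5) by (simp add: sums_unique[symmetric])
qed

lemma fps_nth_mult_nonneg:
  fixes F G :: "real fps"
  assumes "\<And>n. fps_nth F n \<ge> 0" "\<And>n. fps_nth G n \<ge> 0"
  shows "fps_nth (F * G) n \<ge> 0"
  by (simp add: fps_mult_nth sum_nonneg assms)

lemma fps_nth_power_nonneg:
  fixes F :: "real fps"
  assumes "\<And>n. fps_nth F n \<ge> 0"
  shows "fps_nth (F ^ i) n \<ge> 0"
  by (induction i arbitrary: n) (simp_all add: fps_nth_mult_nonneg assms)

lemma fps_sums_power_nonneg:
  fixes F :: "real fps"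
  assumes "\<And>n. fps_nth F n \<ge> 0" "s \<ge> 0" "(\<lambda>n. fps_nth F n * s ^ n) sums x"
  shows "(\<lambda>n. fps_nth (F ^ i) n * s ^ n) sums (x ^ i)"
proof (induction i)
  case 0
  have "(\<lambda>n. fps_nth (F ^ 0) n * s ^ n) = (\<lambda>n. if n = 0 then 1 else 0)"
    by auto
  then show ?case
    using sums_single[of 0 "\<lambda>_. 1::real"] by simp
next
  case (Suc i)
  then show ?case
    using fps_sums_mult_nonneg[OF assms(1) fps_nth_power_nonneg[OF assms(1)] assms(2,3)] by simp
qed

lemma geo_fps_times_zmg_fps_power_sums:
  assumes "m \<ge> 0" "0 \<le> \<pi>" "\<pi> \<le> 1" "0 \<le> s" "s < 1"
  shows "(\<lambda>n. fps_nth (geo_fps m * zmg_fps \<pi> m ^ i) n * s ^ n) sums (geo_pgf m s * zmg_pgf \<pi> m s ^ i)"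
proof -
  have zmg: "fps_nth (zmg_fps \<pi> m) n \<ge> 0" for n
    using assms by (simp add: zmg_fps_def zmg_p_nonneg)
  show ?thesis
    using assms
    by (intro fps_sums_mult_nonneg fps_nth_power_nonneg fps_sums_power_nonneg zmg)
      (simp_all add: geo_fps_def zmg_fps_def geo_p_nonneg geo_p_sums zmg_p_sums)
qed

definition thinning_pgf :: "real \<Rightarrow> real \<Rightarrow> real \<Rightarrow> real" where
  "thinning_pgf \<mu> a s = 1 - a * (1 - s) / (1 + (1 - a) * \<mu> * (1 - s))"

lemma zmg_pgf_eq_thinning_pgf:
  assumes "m = (1 - a) * \<mu>" "m > 0" "s \<le> 1"
  shows "zmg_pgf (1 - a / m) m s = thinning_pgf \<mu> a s"
proof -
  have D: "1 + m * (1 - s) > 0"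
    using assms by (simp add: add_pos_nonneg)
  have "zmg_pgf (1 - a / m) m s = 1 - a / m * (1 - 1 / (1 + m * (1 - s)))"
    by (simp add: zmg_pgf_def geo_pgf_def algebra_simps)
  also have "1 - 1 / (1 + m * (1 - s)) = m * (1 - s) / (1 + m * (1 - s))"
    using D by (simp add: field_simps)
  also have "a / m * (m * (1 - s) / (1 + m * (1 - s))) = a * (1 - s) / (1 + m * (1 - s))"
    using assms(2) by simp
  finally show ?thesis
    using assms(1) by (simp add: thinning_pgf_def mult.assoc)
qed

lemma thinning_pgf_range:
  assumes "\<mu> \<ge> 0" "0 < a" "a \<le> 1" "0 \<le> s" "s < 1"
  shows "0 \<le> thinning_pgf \<mu> a s" "thinning_pgf \<mu> a s < 1"
proof -
  let ?D = "1 + (1 - a) * \<mu> * (1 - s)"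
  have D: "?D \<ge> 1"
    using assms by simp
  have "a * (1 - s) * 1 \<le> a * (1 - s) * ?D"
    using D assms by (intro mult_left_mono) auto
  then have "a * (1 - s) / ?D \<le> a * (1 - s)"
    using D by (simp add: divide_le_eq)
  moreover have "a * (1 - s) \<le> 1"
    using assms by (simp add: mult_le_one)
  moreover have "a * (1 - s) / ?D > 0"
    using assms D by (intro divide_pos_pos mult_pos_pos) linarith+
  ultimately show "0 \<le> thinning_pgf \<mu> a s" "thinning_pgf \<mu> a s < 1"
    by (simp_all add: thinning_pgf_def)
qed

lemma thinning_pgf_compose:
  assumes "\<mu> \<ge> 0" "0 \<le> a" "a \<le> 1" "0 \<le> b" "b \<le> 1" "s \<le> 1"
  shows "thinning_pgf \<mu> a (thinning_pgf \<mu> b s) = thinning_pgf \<mu> (a * b) s"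
    and "geo_pgf ((1 - a) * \<mu>) (thinning_pgf \<mu> b s) * geo_pgf ((1 - b) * \<mu>) s
           = geo_pgf ((1 - a * b) * \<mu>) s"
proof -
  let ?u = "1 - s"
  define Db where "Db = 1 + (1 - b) * \<mu> * ?u"
  define u' where "u' = b * ?u / Db"
  define Da where "Da = 1 + (1 - a) * \<mu> * u'"
  have Db: "Db > 0"
    using assms by (simp add: Db_def add_pos_nonneg)
  have u': "1 - thinning_pgf \<mu> b s = u'"
    by (simp add: thinning_pgf_def u'_def Db_def)
  have key: "Da * Db = 1 + (1 - a * b) * \<mu> * ?u"
  proof -
    have "Da * Db = Db + (1 - a) * \<mu> * (u' * Db)"
      by (simp add: Da_def algebra_simps)
    also have "u' * Db = b * ?u"
      using Db by (simp add: u'_def)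
    finally show ?thesis
      by (simp add: Db_def algebra_simps)
  qed
  have "a * u' / Da = a * (u' * Db) / (Da * Db)"
    using Db by simp
  also have "\<dots> = a * b * ?u / (1 + (1 - a * b) * \<mu> * ?u)"
    using Db by (simp add: key u'_def)
  finally show "thinning_pgf \<mu> a (thinning_pgf \<mu> b s) = thinning_pgf \<mu> (a * b) s"
    using u' by (simp add: thinning_pgf_def Da_def)
  have "geo_pgf ((1 - a) * \<mu>) (thinning_pgf \<mu> b s) * geo_pgf ((1 - b) * \<mu>) s = 1 / (Da * Db)"
    using u' by (simp add: geo_pgf_def Da_def Db_def mult_ac)
  then show "geo_pgf ((1 - a) * \<mu>) (thinning_pgf \<mu> b s) * geo_pgf ((1 - b) * \<mu>) s
      = geo_pgf ((1 - a * b) * \<mu>) s"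
    by (simp add: key geo_pgf_def mult_ac)
qed

section \<open>Expectations over level sets and independent blocks\<close>

lemma (in prob_space) integral_indicator_level_sets_sums:
  fixes f :: "'a \<Rightarrow> real" and Z :: "'a \<Rightarrow> nat"
  assumes [measurable]: "f \<in> borel_measurable M" "Z \<in> measurable M (count_space UNIV)" "A \<in> sets M"
    and bounded: "\<And>\<omega>. \<omega> \<in> space M \<Longrightarrow> \<bar>f \<omega>\<bar> \<le> B"
  shows "(\<lambda>n. \<integral>\<omega>. f \<omega> * indicator ({\<omega>\<in>space M. Z \<omega> = n} \<inter> A) \<omega> \<partial>M)
           sums (\<integral>\<omega>. f \<omega> * indicator A \<omega> \<partial>M)"
proof -
  define S where "S n = {\<omega>\<in>space M. Z \<omega> = n} \<inter> A" for n
  have S [measurable]: "S n \<in> sets M" for n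
    unfolding S_def by measurable
  have "B \<ge> 0"
    using bounded not_empty by fastforce
  then have bound_S: "\<bar>f \<omega> * indicator (S n) \<omega>\<bar> \<le> B * indicator (S n) \<omega>" if "\<omega> \<in> space M" for \<omega> n
    using bounded[OF that] by (simp add: indicator_def abs_mult)
  have integrable: "integrable M (\<lambda>\<omega>. f \<omega> * indicator (S n) \<omega>)" for n
    using bounded \<open>B \<ge> 0\<close>
    by (intro integrable_const_bound[where B=B] AE_I2) (auto simp: indicator_def)
  have single: "(\<lambda>n. g (f \<omega> * indicator (S n) \<omega>)) sums g (f \<omega> * indicator A \<omega>)"
    if "\<omega> \<in> space M" "g 0 = 0" for \<omega> and g :: "real \<Rightarrow> real"
  proof -
    have "(\<lambda>n. g (f \<omega> * indicator (S n) \<omega>)) = (\<lambda>n. if n = Z \<omega> then g (f \<omega> * indicator A \<omega>) else 0)"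
      using that by (auto simp: S_def split: split_indicator)
    then show ?thesis
      using sums_single by simp
  qed
  have "disjoint_family S"
    by (auto simp: disjoint_family_on_def S_def)
  then have "(\<lambda>n. prob (S n)) sums prob (\<Union>n. S n)"
    by (intro finite_measure_UNION) auto
  then have "summable (\<lambda>n. \<integral>\<omega>. norm (f \<omega> * indicator (S n) \<omega>) \<partial>M)"
  proof (rule summable_comparison_test'[OF summable_mult[OF sums_summable], where N=0])
    fix n
    have "(\<integral>\<omega>. norm (f \<omega> * indicator (S n) \<omega>) \<partial>M) \<le> (\<integral>\<omega>. B * indicator (S n) \<omega> \<partial>M)"
      using integrable by (intro integral_mono integrable_mult_right) (auto intro: bound_S simp: emeasure_eq_measure)
    then show "norm (\<integral>\<omega>. norm (f \<omega> * indicator (S n) \<omega>) \<partial>M) \<le> B * prob (S n)"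
      by simp
  qed
  moreover have "summable (\<lambda>n. norm (f \<omega> * indicator (S n) \<omega>))" if "\<omega> \<in> space M" for \<omega>
    using single[OF that, of norm] by (simp add: sums_summable)
  ultimately have "(\<lambda>n. \<integral>\<omega>. f \<omega> * indicator (S n) \<omega> \<partial>M) sums (\<integral>\<omega>. (\<Sum>n. f \<omega> * indicator (S n) \<omega>) \<partial>M)"
    using integrable by (intro sums_integral) auto
  also have "(\<integral>\<omega>. (\<Sum>n. f \<omega> * indicator (S n) \<omega>) \<partial>M) = (\<integral>\<omega>. f \<omega> * indicator A \<omega> \<partial>M)"
    using single[of _ "\<lambda>x. x"] by (intro Bochner_Integration.integral_cong) (auto simp: sums_iff)
  finally show ?thesis
    by (simp add: S_def)
qed

lemma (in prob_space) integral_fun_indicator_sums: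
  fixes Z :: "'a \<Rightarrow> nat" and g :: "nat \<Rightarrow> real"
  assumes [measurable]: "Z \<in> measurable M (count_space UNIV)" "A \<in> sets M"
    and "\<And>n. \<bar>g n\<bar> \<le> B"
  shows "(\<lambda>n. g n * prob ({\<omega>\<in>space M. Z \<omega> = n} \<inter> A)) sums (\<integral>\<omega>. g (Z \<omega>) * indicator A \<omega> \<partial>M)"
proof -
  have "(\<integral>\<omega>. g (Z \<omega>) * indicator ({\<omega>\<in>space M. Z \<omega> = n} \<inter> A) \<omega> \<partial>M)
      = (\<integral>\<omega>. g n * indicator ({\<omega>\<in>space M. Z \<omega> = n} \<inter> A) \<omega> \<partial>M)" for n
    by (intro Bochner_Integration.integral_cong) (auto split: split_indicator)
  then show ?thesis
    using integral_indicator_level_sets_sums[of "\<lambda>\<omega>. g (Z \<omega>)" Z A B] assms by simp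
qed

lemma (in prob_space) integral_power_eq_pgf:
  fixes Z :: "'a \<Rightarrow> nat"
  assumes "Z \<in> measurable M (count_space UNIV)" "\<And>n. prob {\<omega>\<in>space M. Z \<omega> = n} = q n"
    and "(\<lambda>n. q n * s ^ n) sums S" "0 \<le> s" "s \<le> 1"
  shows "(\<integral>\<omega>. s ^ Z \<omega> \<partial>M) = S"
proof -
  have "(\<lambda>n. s ^ n * prob ({\<omega>\<in>space M. Z \<omega> = n} \<inter> space M)) sums (\<integral>\<omega>. s ^ Z \<omega> * indicator (space M) \<omega> \<partial>M)"
    using assms by (intro integral_fun_indicator_sums[where B=1]) (auto intro: power_le_one)
  moreover have "(\<integral>\<omega>. s ^ Z \<omega> * indicator (space M) \<omega> \<partial>M) = (\<integral>\<omega>. s ^ Z \<omega> \<partial>M)"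
    by (intro Bochner_Integration.integral_cong) auto
  ultimately show ?thesis
    using assms(2,3) by (simp add: Int_absorb2 mult.commute sums_iff)
qed

lemma (in prob_space) integral_indep_block_times_prod:
  fixes Y :: "'i \<Rightarrow> 'a \<Rightarrow> 'b" and F :: "('i \<Rightarrow> 'b) \<Rightarrow> real" and g :: "'i \<Rightarrow> 'b \<Rightarrow> real"
  assumes indep: "indep_vars (\<lambda>_. count_space UNIV) Y I"
    and "B \<subseteq> I" "J \<subseteq> I" "finite J" "B \<inter> J = {}"
    and F: "F \<in> borel_measurable (Pi\<^sub>M B (\<lambda>_. count_space UNIV))" "\<And>v. \<bar>F v\<bar> \<le> C"
    and g: "\<And>k x. \<bar>g k x\<bar> \<le> C"
  shows "(\<integral>\<omega>. F (restrict (\<lambda>k. Y k \<omega>) B) * (\<Prod>k\<in>J. g k (Y k \<omega>)) \<partial>M)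
           = (\<integral>\<omega>. F (restrict (\<lambda>k. Y k \<omega>) B) \<partial>M) * (\<Prod>k\<in>J. \<integral>\<omega>. g k (Y k \<omega>) \<partial>M)"
proof -
  define L where "L = insert None (Some ` J)"
  define K where "K j = (case j of None \<Rightarrow> B | Some k \<Rightarrow> {k})" for j
  define h where "h j v = (case j of None \<Rightarrow> F v | Some k \<Rightarrow> g k (v k))" for j and v :: "'i \<Rightarrow> 'b"
  define Z where "Z j \<omega> = h j (restrict (\<lambda>k. Y k \<omega>) (K j))" for j \<omega>
  have "indep_vars (\<lambda>j. Pi\<^sub>M (K j) (\<lambda>_. count_space UNIV)) (\<lambda>j \<omega>. restrict (\<lambda>k. Y k \<omega>) (K j)) L"
    using assms(2-5) by (intro indep_vars_restrict[OF indep]) (auto simp: L_def K_def disjoint_family_on_def)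
  moreover have "h j \<in> borel_measurable (Pi\<^sub>M (K j) (\<lambda>_. count_space UNIV))" if "j \<in> L" for j
  proof (cases j)
    case (Some k)
    have "(\<lambda>v. v k) \<in> measurable (Pi\<^sub>M {k} (\<lambda>_. count_space UNIV)) (count_space UNIV)"
      by (rule measurable_component_singleton) simp
    then show ?thesis
      using Some measurable_comp[of "\<lambda>v. v k" _ "count_space UNIV" "g k" borel]
      by (simp add: h_def[abs_def] K_def comp_def)
  qed (use F in \<open>simp add: h_def[abs_def] K_def\<close>)
  ultimately have indep_Z: "indep_vars (\<lambda>_. borel) Z L"
    unfolding Z_def by (rule indep_vars_compose2)
  have "integrable M (Z j)" if "j \<in> L" for j
    using indep_Z that F(2) g unfolding indep_vars_def
    by (intro integrable_const_bound[where B=C]) (auto simp: Z_def h_def split: option.splits)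
  then have "(\<integral>\<omega>. (\<Prod>j\<in>L. Z j \<omega>) \<partial>M) = (\<Prod>j\<in>L. \<integral>\<omega>. Z j \<omega> \<partial>M)"
    using indep_Z by (intro indep_vars_lebesgue_integral) (auto simp: L_def assms(4))
  moreover have "(\<Prod>j\<in>L. f j) = f None * (\<Prod>k\<in>J. f (Some k))" for f :: "'i option \<Rightarrow> real"
    using assms(4) by (simp add: L_def prod.reindex)
  ultimately show ?thesis
    by (simp add: Z_def h_def K_def)
qed

section \<open>The Geo-INAR(1) process\<close>

text \<open>
  Noise index \<open>Inl 0\<close> stands for \<open>X 0\<close>, \<open>Inl t\<close> for the innovation at time \<open>t \<ge> 1\<close> and
  \<open>Inr (t, i)\<close> for the \<open>i\<close>-th offspring variable at time \<open>t\<close>. The path \<open>X 0, \<dots>, X u\<close> is a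
  function of the noise indexed by \<open>history u\<close>.
\<close>

definition history :: "nat \<Rightarrow> (nat + nat \<times> nat) set" where
  "history u = {Inl r | r. r \<le> u} \<union> {Inr (r, i) | r i. 1 \<le> r \<and> r \<le> u \<and> 1 \<le> i}"

fun inar_path :: "nat \<Rightarrow> (nat + nat \<times> nat \<Rightarrow> nat) \<Rightarrow> nat" where
  "inar_path 0 v = v (Inl 0)"
| "inar_path (Suc r) v = (\<Sum>i = 1..inar_path r v. v (Inr (Suc r, i))) + v (Inl (Suc r))"

lemma history_mono: "r \<le> u \<Longrightarrow> history r \<subseteq> history u"
  by (auto simp: history_def)

lemma inar_path_cong: "(\<And>k. k \<in> history r \<Longrightarrow> v k = w k) \<Longrightarrow> inar_path r v = inar_path r w"
proof (induction r)
  case (Suc r)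
  then have "inar_path r v = inar_path r w"
    using history_mono[of r "Suc r"] by auto
  with Suc.prems show ?case
    by (auto simp: history_def intro!: sum.cong)
qed (simp add: history_def)

lemma measurable_random_sum:
  fixes f h :: "'a \<Rightarrow> nat" and g :: "nat \<Rightarrow> 'a \<Rightarrow> nat"
  assumes [measurable]: "f \<in> measurable N (count_space UNIV)" "h \<in> measurable N (count_space UNIV)"
    "\<And>i. g i \<in> measurable N (count_space UNIV)"
  shows "(\<lambda>x. (\<Sum>i<f x. g i x) + h x) \<in> measurable N (count_space UNIV)"
  by measurable

lemma measurable_inar_path:
  "r \<le> u \<Longrightarrow> inar_path r \<in> measurable (Pi\<^sub>M (history u) (\<lambda>_. count_space UNIV)) (count_space UNIV)"
proof (induction r)
  case 0
  show ?case
    by (simp add: measurable_component_singleton history_def)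
next
  case (Suc r)
  have "inar_path (Suc r) = (\<lambda>v. (\<Sum>i<inar_path r v. v (Inr (Suc r, Suc i))) + v (Inl (Suc r)))"
    by (simp add: fun_eq_iff sum.atLeast1_atMost_eq)
  with Suc show ?case
    by (auto intro!: measurable_random_sum measurable_component_singleton simp: history_def)
qed

locale geo_inar = prob_space M for M :: "'a measure" +
  fixes X E :: "nat \<Rightarrow> 'a \<Rightarrow> nat" and G :: "nat \<Rightarrow> nat \<Rightarrow> 'a \<Rightarrow> nat" and \<mu> \<alpha> :: real
  assumes mu_pos: "\<mu> > 0"
    and alpha_pos: "\<alpha> > 0" and alpha_bound: "\<alpha> < \<mu> / (1 + \<mu>)"
    and indep: "indep_vars (\<lambda>_. count_space UNIV)
         (\<lambda>k. case k of Inl t \<Rightarrow> (if t = 0 then X 0 else E t) | Inr (t, i) \<Rightarrow> G t i)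
         ({Inl t | t. True} \<union> {Inr (t, i) | t i. t \<ge> 1 \<and> i \<ge> 1})"
    and E_dist: "\<And>t k. t \<ge> 1 \<Longrightarrow>
         measure M {\<omega> \<in> space M. E t \<omega> = k} = geo_p ((1 - \<alpha>) * \<mu>) k"
    and G_dist: "\<And>t i k. t \<ge> 1 \<Longrightarrow> i \<ge> 1 \<Longrightarrow>
         measure M {\<omega> \<in> space M. G t i \<omega> = k}
           = zmg_p (1 - \<alpha> / ((1 - \<alpha>) * \<mu>)) ((1 - \<alpha>) * \<mu>) k"
    and recursion: "\<And>t \<omega>. t \<ge> 1 \<Longrightarrow> \<omega> \<in> space M \<Longrightarrow>
         X t \<omega> = (\<Sum>i = 1..X (t - 1) \<omega>. G t i \<omega>) + E t \<omega>"
begin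

lemma alpha_lt_1: "\<alpha> < 1"
proof -
  have "\<mu> / (1 + \<mu>) < 1"
    using mu_pos by simp
  then show ?thesis
    using alpha_bound by linarith
qed

lemma alpha_power_bounds:
  assumes "h \<ge> 1"
  shows "0 < \<alpha> ^ h" "\<alpha> ^ h < 1" "\<alpha> ^ h < (1 - \<alpha> ^ h) * \<mu>"
proof -
  have "\<alpha> ^ h \<le> \<alpha>"
    using power_decreasing[of 1 h \<alpha>] assms alpha_pos alpha_lt_1 by simp
  then have "\<alpha> ^ h * (1 + \<mu>) \<le> \<alpha> * (1 + \<mu>)"
    using mu_pos by (intro mult_right_mono) auto
  moreover have "\<alpha> * (1 + \<mu>) < \<mu>"
    using alpha_bound mu_pos by (simp add: pos_less_divide_eq)
  ultimately have "\<alpha> ^ h * (1 + \<mu>) < \<mu>"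
    by linarith
  then show "0 < \<alpha> ^ h" "\<alpha> ^ h < 1" "\<alpha> ^ h < (1 - \<alpha> ^ h) * \<mu>"
    using \<open>\<alpha> ^ h \<le> \<alpha>\<close> alpha_pos alpha_lt_1 by (auto simp: algebra_simps)
qed

definition noise :: "nat + nat \<times> nat \<Rightarrow> 'a \<Rightarrow> nat" where
  "noise k = (case k of Inl t \<Rightarrow> (if t = 0 then X 0 else E t) | Inr (t, i) \<Rightarrow> G t i)"

definition noise_index :: "(nat + nat \<times> nat) set" where
  "noise_index = {Inl t | t. True} \<union> {Inr (t, i) | t i. t \<ge> 1 \<and> i \<ge> 1}"

lemma indep_noise: "indep_vars (\<lambda>_. count_space UNIV) noise noise_index"
  using indep unfolding noise_def [abs_def] noise_index_def .

lemma measurable_noise: "k \<in> noise_index \<Longrightarrow> noise k \<in> measurable M (count_space UNIV)"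
  using indep_noise unfolding indep_vars_def by blast

lemma measurable_E [measurable]: "t \<ge> 1 \<Longrightarrow> E t \<in> measurable M (count_space UNIV)"
  using measurable_noise[of "Inl t"] by (simp add: noise_def noise_index_def)

lemma measurable_G [measurable]: "t \<ge> 1 \<Longrightarrow> i \<ge> 1 \<Longrightarrow> G t i \<in> measurable M (count_space UNIV)"
  using measurable_noise[of "Inr (t, i)"] by (simp add: noise_def noise_index_def)

lemma history_subset_noise_index: "history u \<subseteq> noise_index"
  by (auto simp: history_def noise_index_def)

lemma X_eq_inar_path:
  assumes "\<omega> \<in> space M" "r \<le> u"
  shows "X r \<omega> = inar_path r (restrict (\<lambda>k. noise k \<omega>) (history u))"
proof -
  have "X r \<omega> = inar_path r (\<lambda>k. noise k \<omega>)"
    by (induction r) (simp_all add: noise_def recursion[OF _ assms(1)])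
  also have "\<dots> = inar_path r (restrict (\<lambda>k. noise k \<omega>) (history u))"
    using history_mono[OF assms(2)] by (intro inar_path_cong) auto
  finally show ?thesis .
qed

lemma measurable_X [measurable]: "X r \<in> measurable M (count_space UNIV)"
proof -
  have "(\<lambda>\<omega>. restrict (\<lambda>k. noise k \<omega>) (history r)) \<in> measurable M (Pi\<^sub>M (history r) (\<lambda>_. count_space UNIV))"
    using history_subset_noise_index measurable_noise by (intro measurable_restrict) auto
  from measurable_comp[OF this measurable_inar_path[OF order_refl]]
  show ?thesis
    by (rule measurable_cong[THEN iffD1, rotated]) (simp add: X_eq_inar_path[OF _ order_refl])
qed

lemma integral_power_E:
  assumes "t \<ge> 1" "0 \<le> s" "s < 1"
  shows "(\<integral>\<omega>. s ^ E t \<omega> \<partial>M) = geo_pgf ((1 - \<alpha>) * \<mu>) s"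
  using assms alpha_lt_1 mu_pos by (intro integral_power_eq_pgf[OF measurable_E E_dist geo_p_sums]) auto

lemma integral_power_G:
  assumes "t \<ge> 1" "i \<ge> 1" "0 \<le> s" "s < 1"
  shows "(\<integral>\<omega>. s ^ G t i \<omega> \<partial>M) = thinning_pgf \<mu> \<alpha> s"
proof -
  have "(\<integral>\<omega>. s ^ G t i \<omega> \<partial>M) = zmg_pgf (1 - \<alpha> / ((1 - \<alpha>) * \<mu>)) ((1 - \<alpha>) * \<mu>) s"
    using assms alpha_lt_1 mu_pos by (intro integral_power_eq_pgf[OF measurable_G G_dist zmg_p_sums]) auto
  also have "\<dots> = thinning_pgf \<mu> \<alpha> s"
    using assms alpha_lt_1 mu_pos by (intro zmg_pgf_eq_thinning_pgf) auto
  finally show ?thesis .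
qed

lemma integral_power_X_Suc_indicator:
  fixes n i :: nat
  assumes "t \<le> u" "0 \<le> s" "s < 1"
  defines "A \<equiv> {\<omega>\<in>space M. X u \<omega> = n} \<inter> {\<omega>\<in>space M. X t \<omega> = i}"
  shows "(\<integral>\<omega>. s ^ X (Suc u) \<omega> * indicator A \<omega> \<partial>M)
           = prob A * thinning_pgf \<mu> \<alpha> s ^ n * geo_pgf ((1 - \<alpha>) * \<mu>) s"
proof -
  \<comment> \<open>\<open>A\<close> depends on the noise in \<open>history u\<close>, and on \<open>A\<close> the step to \<open>X (Suc u)\<close> uses the fresh noise in \<open>J\<close>.\<close>
  define J where "J = insert (Inl (Suc u)) ((\<lambda>j. Inr (Suc u, j)) ` {1..n})"
  define F :: "(nat + nat \<times> nat \<Rightarrow> nat) \<Rightarrow> real"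
    where "F v = indicator {n} (inar_path u v) * indicator {i} (inar_path t v)" for v
  let ?restr = "\<lambda>\<omega>. restrict (\<lambda>k. noise k \<omega>) (history u)"
  have prod_J: "(\<Prod>k\<in>J. f k) = f (Inl (Suc u)) * (\<Prod>j=1..n. f (Inr (Suc u, j)))" for f :: "_ \<Rightarrow> real"
    unfolding J_def by (subst prod.insert) (auto simp: prod.reindex inj_on_def)
  have indicator_path: "(\<lambda>v. indicator {c} (inar_path r v) :: real)
      \<in> borel_measurable (Pi\<^sub>M (history u) (\<lambda>_. count_space UNIV))" if "r \<le> u" for c r
    using measurable_comp[OF measurable_inar_path[OF that], of "indicator {c}" borel]
    by (simp add: comp_def)
  have F_A: "F (?restr \<omega>) = indicator A \<omega>" if "\<omega> \<in> space M" for \<omega>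
    using that X_eq_inar_path[of \<omega> u u] X_eq_inar_path[of \<omega> t u] assms(1)
    by (simp add: F_def A_def split: split_indicator)
  have "(\<integral>\<omega>. F (?restr \<omega>) * (\<Prod>k\<in>J. s ^ noise k \<omega>) \<partial>M)
      = (\<integral>\<omega>. F (?restr \<omega>) \<partial>M) * (\<Prod>k\<in>J. \<integral>\<omega>. s ^ noise k \<omega> \<partial>M)"
  proof (rule integral_indep_block_times_prod[OF indep_noise history_subset_noise_index,
        where C=1 and g="\<lambda>_ x. s ^ x"])
    show "J \<subseteq> noise_index" "finite J" "history u \<inter> J = {}"
      by (auto simp: J_def noise_index_def history_def)
    show "F \<in> borel_measurable (Pi\<^sub>M (history u) (\<lambda>_. count_space UNIV))"
      unfolding F_def using assms(1) by (intro borel_measurable_times indicator_path) auto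
    show "\<bar>F v\<bar> \<le> 1" "\<bar>s ^ x\<bar> \<le> 1" for v x
      using assms(2,3) by (auto simp: F_def power_le_one split: split_indicator)
  qed
  also have "(\<integral>\<omega>. F (?restr \<omega>) \<partial>M) = prob A"
  proof -
    have "A \<in> sets M"
      unfolding A_def by measurable
    then show ?thesis
      using F_A by (simp cong: Bochner_Integration.integral_cong)
  qed
  also have "(\<Prod>k\<in>J. \<integral>\<omega>. s ^ noise k \<omega> \<partial>M) = geo_pgf ((1 - \<alpha>) * \<mu>) s * thinning_pgf \<mu> \<alpha> s ^ n"
    using assms(2,3) by (simp add: prod_J noise_def integral_power_E integral_power_G)
  also have "(\<integral>\<omega>. F (?restr \<omega>) * (\<Prod>k\<in>J. s ^ noise k \<omega>) \<partial>M)
      = (\<integral>\<omega>. s ^ X (Suc u) \<omega> * indicator A \<omega> \<partial>M)"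
  proof (intro Bochner_Integration.integral_cong refl)
    fix \<omega> assume \<omega>: "\<omega> \<in> space M"
    have "(\<Prod>k\<in>J. s ^ noise k \<omega>) = s ^ ((\<Sum>j = 1..n. G (Suc u) j \<omega>) + E (Suc u) \<omega>)"
      by (simp add: prod_J noise_def power_add power_sum)
    then show "F (?restr \<omega>) * (\<Prod>k\<in>J. s ^ noise k \<omega>) = s ^ X (Suc u) \<omega> * indicator A \<omega>"
      using recursion[of "Suc u" \<omega>] \<omega> by (simp add: F_A A_def split: split_indicator)
  qed
  finally show ?thesis
    by (simp add: mult_ac)
qed

lemma integral_power_X_add_indicator:
  fixes i :: nat
  assumes "0 \<le> s" "s < 1"
  shows "(\<integral>\<omega>. s ^ X (t + h) \<omega> * indicator {\<omega>\<in>space M. X t \<omega> = i} \<omega> \<partial>M)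
           = prob {\<omega>\<in>space M. X t \<omega> = i} * thinning_pgf \<mu> (\<alpha> ^ h) s ^ i * geo_pgf ((1 - \<alpha> ^ h) * \<mu>) s"
  using assms
proof (induction h arbitrary: s)
  case 0
  have "(\<integral>\<omega>. s ^ X t \<omega> * indicator {\<omega>\<in>space M. X t \<omega> = i} \<omega> \<partial>M)
      = (\<integral>\<omega>. s ^ i * indicator {\<omega>\<in>space M. X t \<omega> = i} \<omega> \<partial>M)"
    by (intro Bochner_Integration.integral_cong) (auto split: split_indicator)
  then show ?case
    by (simp add: thinning_pgf_def geo_pgf_def mult.commute)
next
  case (Suc h)
  let ?A = "{\<omega>\<in>space M. X t \<omega> = i}" and ?u = "t + h" and ?\<phi> = "thinning_pgf \<mu> \<alpha> s"
  have \<phi>: "0 \<le> ?\<phi>" "?\<phi> < 1"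
    using thinning_pgf_range[of \<mu> \<alpha> s] mu_pos alpha_pos alpha_lt_1 Suc.prems by auto
  have A [measurable]: "?A \<in> sets M"
    by measurable
  have "(\<lambda>n. \<integral>\<omega>. s ^ X (Suc ?u) \<omega> * indicator ({\<omega>\<in>space M. X ?u \<omega> = n} \<inter> ?A) \<omega> \<partial>M)
      sums (\<integral>\<omega>. s ^ X (Suc ?u) \<omega> * indicator ?A \<omega> \<partial>M)"
    using Suc.prems by (intro integral_indicator_level_sets_sums[where B=1]) (auto intro: power_le_one)
  moreover have "(\<lambda>n. ?\<phi> ^ n * prob ({\<omega>\<in>space M. X ?u \<omega> = n} \<inter> ?A) * geo_pgf ((1 - \<alpha>) * \<mu>) s)
      sums ((\<integral>\<omega>. ?\<phi> ^ X ?u \<omega> * indicator ?A \<omega> \<partial>M) * geo_pgf ((1 - \<alpha>) * \<mu>) s)"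
    using \<phi> by (intro sums_mult2 integral_fun_indicator_sums[where B=1]) (auto intro: power_le_one)
  ultimately have "(\<integral>\<omega>. s ^ X (Suc ?u) \<omega> * indicator ?A \<omega> \<partial>M)
      = (\<integral>\<omega>. ?\<phi> ^ X ?u \<omega> * indicator ?A \<omega> \<partial>M) * geo_pgf ((1 - \<alpha>) * \<mu>) s"
    using Suc.prems by (simp add: integral_power_X_Suc_indicator sums_iff mult_ac)
  also have "\<dots> = prob ?A * thinning_pgf \<mu> (\<alpha> ^ h) ?\<phi> ^ i
      * (geo_pgf ((1 - \<alpha> ^ h) * \<mu>) ?\<phi> * geo_pgf ((1 - \<alpha>) * \<mu>) s)"
    using Suc.IH[OF \<phi>] by simp
  also have "\<dots> = prob ?A * thinning_pgf \<mu> (\<alpha> ^ Suc h) s ^ i * geo_pgf ((1 - \<alpha> ^ Suc h) * \<mu>) s"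
    using thinning_pgf_compose[of \<mu> "\<alpha> ^ h" \<alpha> s] mu_pos alpha_pos alpha_lt_1 Suc.prems
    by (simp add: power_le_one power_Suc2 del: power_Suc)
  finally show ?case
    by simp
qed

lemma joint_prob_eq_fps_nth:
  fixes i j :: nat
  assumes "h \<ge> 1"
  defines "m \<equiv> (1 - \<alpha> ^ h) * \<mu>"
  shows "prob {\<omega>\<in>space M. X (t + h) \<omega> = j \<and> X t \<omega> = i}
           = prob {\<omega>\<in>space M. X t \<omega> = i} * fps_nth (geo_fps m * zmg_fps (1 - \<alpha> ^ h / m) m ^ i) j"
proof -
  let ?A = "{\<omega>\<in>space M. X t \<omega> = i}"
  note bounds = alpha_power_bounds[OF assms(1), folded m_def]
  have m: "m > 0"
    using bounds by linarith
  have A [measurable]: "?A \<in> sets M"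
    by measurable
  have "prob ({\<omega>\<in>space M. X (t + h) \<omega> = k} \<inter> ?A)
      = prob ?A * fps_nth (geo_fps m * zmg_fps (1 - \<alpha> ^ h / m) m ^ i) k" for k
  proof (rule powser_sums_on_interval_coeffs_unique[where \<delta>=1])
    fix s :: real assume s: "0 < s" "s < 1"
    have "(\<lambda>n. s ^ n * prob ({\<omega>\<in>space M. X (t + h) \<omega> = n} \<inter> ?A))
        sums (prob ?A * thinning_pgf \<mu> (\<alpha> ^ h) s ^ i * geo_pgf m s)"
      using integral_fun_indicator_sums[of "X (t + h)" ?A "\<lambda>n. s ^ n" 1] s
      by (simp add: integral_power_X_add_indicator m_def power_le_one)
    then show "(\<lambda>n. prob ({\<omega>\<in>space M. X (t + h) \<omega> = n} \<inter> ?A) * s ^ n)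
        sums (prob ?A * thinning_pgf \<mu> (\<alpha> ^ h) s ^ i * geo_pgf m s)"
      by (simp add: mult.commute)
    have "(\<lambda>n. fps_nth (geo_fps m * zmg_fps (1 - \<alpha> ^ h / m) m ^ i) n * s ^ n)
        sums (geo_pgf m s * zmg_pgf (1 - \<alpha> ^ h / m) m s ^ i)"
      using m bounds s by (intro geo_fps_times_zmg_fps_power_sums) auto
    also have "zmg_pgf (1 - \<alpha> ^ h / m) m s = thinning_pgf \<mu> (\<alpha> ^ h) s"
      using m s by (intro zmg_pgf_eq_thinning_pgf) (auto simp: m_def)
    finally have "(\<lambda>n. fps_nth (geo_fps m * zmg_fps (1 - \<alpha> ^ h / m) m ^ i) n * s ^ n)
        sums (geo_pgf m s * thinning_pgf \<mu> (\<alpha> ^ h) s ^ i)" .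
    from sums_mult[OF this, of "prob ?A"]
    show "(\<lambda>n. prob ?A * fps_nth (geo_fps m * zmg_fps (1 - \<alpha> ^ h / m) m ^ i) n * s ^ n)
        sums (prob ?A * thinning_pgf \<mu> (\<alpha> ^ h) s ^ i * geo_pgf m s)"
      by (simp add: mult_ac)
  qed simp
  moreover have "{\<omega>\<in>space M. X (t + h) \<omega> = j \<and> X t \<omega> = i} = {\<omega>\<in>space M. X (t + h) \<omega> = j} \<inter> ?A"
    by auto
  ultimately show ?thesis
    by simp
qed

end

theorem proposition7:
  fixes M :: "'a measure"
    and X :: "nat \<Rightarrow> 'a \<Rightarrow> nat"
    and E :: "nat \<Rightarrow> 'a \<Rightarrow> nat"
    and G :: "nat \<Rightarrow> nat \<Rightarrow> 'a \<Rightarrow> nat"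
    and \<mu> \<alpha> :: real
  assumes "prob_space M"
    and mu_pos: "\<mu> > 0"
    and alpha_pos: "\<alpha> > 0" and alpha_bound: "\<alpha> < \<mu> / (1 + \<mu>)"
    and indep: "prob_space.indep_vars M (\<lambda>_. count_space UNIV)
         (\<lambda>k. case k of Inl t \<Rightarrow> (if t = 0 then X 0 else E t) | Inr (t, i) \<Rightarrow> G t i)
         ({Inl t | t. True} \<union> {Inr (t, i) | t i. t \<ge> 1 \<and> i \<ge> 1})"
    and E_dist: "\<And>t k. t \<ge> 1 \<Longrightarrow>
         measure M {\<omega> \<in> space M. E t \<omega> = k} = geo_p ((1 - \<alpha>) * \<mu>) k"
    and G_dist: "\<And>t i k. t \<ge> 1 \<Longrightarrow> i \<ge> 1 \<Longrightarrow>
         measure M {\<omega> \<in> space M. G t i \<omega> = k}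
           = zmg_p (1 - \<alpha> / ((1 - \<alpha>) * \<mu>)) ((1 - \<alpha>) * \<mu>) k"
    and recursion: "\<And>t \<omega>. t \<ge> 1 \<Longrightarrow> \<omega> \<in> space M \<Longrightarrow>
         X t \<omega> = (\<Sum>i = 1..X (t - 1) \<omega>. G t i \<omega>) + E t \<omega>"
    and X_dist: "\<And>t k. measure M {\<omega> \<in> space M. X t \<omega> = k} = geo_p \<mu> k"
    and h_pos: "h \<ge> 1"
  shows
    "let me = (1 - \<alpha> ^ h) * \<mu>;
         ps = 1 - \<alpha> ^ h / (1 + me);
         p = (me - \<alpha> ^ h) / (1 + me - \<alpha> ^ h);
         P = (\<lambda>i j. measure M {\<omega> \<in> space M. X (t + h) \<omega> = j \<and> X t \<omega> = i}
                      / measure M {\<omega> \<in> space M. X t \<omega> = i})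
     in (\<forall>j::nat. P 0 j = geo_p me j) \<and>
        (\<forall>i::nat. \<forall>j::nat. i \<ge> 1 \<longrightarrow>
           P i j = geo_p me j * (ps ^ i + (\<Sum>m = 1..j. \<Sum>l = 1..m.
                    (1 + 1 / me) ^ m * coefA l i ps * coefB l m p)))"
proof -
  interpret geo_inar M X E G \<mu> \<alpha>
    by (intro geo_inar.intro geo_inar_axioms.intro) (fact assms)+
  define m where "m = (1 - \<alpha> ^ h) * \<mu>"
  note bounds = alpha_power_bounds[OF h_pos, folded m_def]
  have m: "m > 0" "\<alpha> ^ h < 1 + m"
    using bounds by linarith+
  have transition: "measure M {\<omega> \<in> space M. X (t + h) \<omega> = j \<and> X t \<omega> = i} / measure M {\<omega> \<in> space M. X t \<omega> = i}
      = geo_p m j * ((1 - \<alpha> ^ h / (1 + m)) ^ i + (\<Sum>k = 1..j. \<Sum>l = 1..k.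
          (1 + 1 / m) ^ k * coefA l i (1 - \<alpha> ^ h / (1 + m)) * coefB l k ((m - \<alpha> ^ h) / (1 + m - \<alpha> ^ h))))"
    for i j :: nat
  proof -
    have "measure M {\<omega> \<in> space M. X t \<omega> = i} > 0"
      using X_dist[of t i] mu_pos by (simp add: geo_p_def)
    then show ?thesis
      by (simp add: joint_prob_eq_fps_nth[OF h_pos, folded m_def]
          fps_nth_geo_fps_times_zmg_fps_thinning_power[OF m])
  qed
  have "coefA l 0 q = 0" if "l \<ge> 1" for l q
    using that by (simp add: coefA_def)
  then show ?thesis
    unfolding Let_def m_def [symmetric] transition by simp
qed

end
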